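(* Let $\Gamma$ be a simplicial complex and $p\ge 0$ an integer with $\mathrm{gr}_p(\Gamma)<\infty$. Then $\mathrm{gr}_{p-k}(\Gamma)\le \mathrm{gr}_p(\Gamma)-k$ for all $0\le k\le p$.
   Context: A simplicial complex $\Gamma$ on a finite vertex set $V=V(\Gamma)$ is a family of subsets of $V$ (faces) closed under taking subsets. For $W\subseteq V$, $\Gamma[W]=\{F\in\Gamma:F\subseteq W\}$; for a face $F$ (possibly empty), $\mathrm{lk}_\Gamma(F)=\{G\setminus F: F\subseteq G\in\Gamma\}$. Fix a field $\mathbf{k}$; $\tilde H_j(\cdot;\mathbf{k})$ is reduced simplicial homology (so $\tilde H_{-1}$ of the empty complex $\{\emptyset\}$ is nonzero). For $q\ge 0$, the $(q-1)$-girth is $\mathrm{gr}_{q-1}(\Gamma)=\min\{|W|: W\subseteq V(\Gamma),\ \tilde H_{q-1}(\mathrm{lk}_\Gamma(F)[W];\mathbf{k})\neq 0 \text{ for some face } F\in\Gamma \text{ (including } F=\emptyset)\}$, or $\infty$ if none exists. *)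

theory Defs
  imports Main "HOL-Library.Extended_Nat"
begin

definition simplicial_complex :: "'a set \<Rightarrow> 'a set set \<Rightarrow> bool" where
  "simplicial_complex V K \<longleftrightarrow> finite V \<and> (\<forall>F\<in>K. F \<subseteq> V) \<and>
     (\<forall>F\<in>K. \<forall>G. G \<subseteq> F \<longrightarrow> G \<in> K)"

definition induced :: "'a set set \<Rightarrow> 'a set \<Rightarrow> 'a set set" where
  "induced K W = {F \<in> K. F \<subseteq> W}"

definition link :: "'a set set \<Rightarrow> 'a set \<Rightarrow> 'a set set" where
  "link K F = {G - F | G. F \<subseteq> G \<and> G \<in> K}"

text \<open>Simplicial boundary map on chains (functions from finite vertex sets to the field),
using the orientation induced by the linear order on vertices; V is an ambient finite
vertex set containing all faces.\<close>
definition bd :: "'a::linorder set \<Rightarrow> ('a set \<Rightarrow> 'k::field) \<Rightarrow> 'a set \<Rightarrow> 'k" where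
  "bd V c G = (\<Sum>v\<in>V - G. (-1) ^ card {u\<in>G. u < v} * c (insert v G))"

text \<open>chains of K with coefficients in 'k supported on faces with d vertices
 (i.e. simplicial (d-1)-chains, including the (-1)-chains on the empty face)\<close>
definition chains :: "'a set set \<Rightarrow> nat \<Rightarrow> ('a set \<Rightarrow> 'k::field) set" where
  "chains K d = {c. \<forall>F. c F \<noteq> 0 \<longrightarrow> F \<in> K \<and> card F = d}"

text \<open>red_hom_nonzero TYPE('k) V K d  means  \<open>H~_{d-1}(K; k) \<noteq> 0\<close> (reduced homology, augmented
chain complex): there is a (d-1)-cycle which is not a boundary.\<close>
definition red_hom_nonzero :: "'k::field itself \<Rightarrow> 'a::linorder set \<Rightarrow> 'a set set \<Rightarrow> nat \<Rightarrow> bool" where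
  "red_hom_nonzero _ V K d \<longleftrightarrow>
     (\<exists>z::'a set \<Rightarrow> 'k. z \<in> chains K d \<and>
        (\<forall>G. card G + 1 = d \<longrightarrow> bd V z G = 0) \<and>
        \<not> (\<exists>c::'a set \<Rightarrow> 'k. c \<in> chains K (d + 1) \<and> (\<forall>F. card F = d \<longrightarrow> bd V c F = z F)))"

text \<open>girth TYPE('k) V K p = gr_p(K) for p \<ge> 0 (homology in degree p, i.e. faces with p+1 vertices).\<close>
definition girth :: "'k::field itself \<Rightarrow> 'a::linorder set \<Rightarrow> 'a set set \<Rightarrow> nat \<Rightarrow> enat" where
  "girth T V K p =
     (if \<exists>W F. W \<subseteq> V \<and> F \<in> K \<and> red_hom_nonzero T V (induced (link K F) W) (p + 1)
      then enat (LEAST n. \<exists>W F. W \<subseteq> V \<and> card W = n \<and> F \<in> K \<and>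
                   red_hom_nonzero T V (induced (link K F) W) (p + 1))
      else \<infinity>)"

end

theory Submission
  imports Defs
begin

text \<open>
  It suffices to prove the case k = 1
  and iterate.  Take a pair (F, W) realising gr_p(K): the induced link lk_K(F)[W] has nonzero
  p-homology and |W| is minimal, so in particular no lk_K(F)[W - {v}] has nonzero p-homology.
  Pick a non-bounding p-cycle z and a vertex v of its support.  Contracting z at v gives a
  (p-1)-cycle of lk_K(F \<union> {v})[W - {v}]; if it were a boundary, say of c', then z plus the
  boundary of the cone over c' would be a p-cycle of lk_K(F)[W - {v}], hence a boundary by
  minimality, and then z itself bounds, a contradiction.  So (F \<union> {v}, W - {v}) witnesses
  gr_{p-1}(K) \<le> |W| - 1.
\<close>

definition sg :: "'a::linorder \<Rightarrow> 'a set \<Rightarrow> 'k::field" where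
  "sg v G = (-1) ^ card {u\<in>G. u < v}"

lemma bd_sg: "bd V c G = (\<Sum>u\<in>V - G. sg u G * c (insert u G))"
  by (simp add: bd_def sg_def)

lemma sg_sq: "(sg v G :: 'k::field) * sg v G = 1"
  by (simp add: sg_def flip: power_add)

lemma sg_insert:
  assumes "finite G" "w \<notin> G" "v \<noteq> w"
  shows "(sg v (insert w G) :: 'k::field) = (if w < v then -1 else 1) * sg v G"
proof (cases "w < v")
  case True
  then have "{u\<in>insert w G. u < v} = insert w {u\<in>G. u < v}" by auto
  then show ?thesis using True assms(1,2) by (simp add: sg_def)
next
  case False
  then have "{u\<in>insert w G. u < v} = {u\<in>G. u < v}" by auto
  then show ?thesis using False by (simp add: sg_def)
qed

lemma sg_swap:
  assumes "finite G" "u \<notin> G" "v \<notin> G" "u \<noteq> v"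
  shows "(sg u G :: 'k::field) * sg v (insert u G) = - (sg v G * sg u (insert v G))"
  using sg_insert[where 'k='k, OF assms(1) assms(3), of u] sg_insert[where 'k='k, OF assms(1,2), of v] assms(4)
  by (cases "u < v") (auto simp: algebra_simps)

lemma sg_swap2:
  assumes "finite G" "u \<notin> G" "v \<notin> G" "u \<noteq> v"
  shows "(sg u (insert v G) :: 'k::field) * sg v (insert u G) = - (sg u G * sg v G)"
  using sg_insert[where 'k='k, OF assms(1) assms(3), of u] sg_insert[where 'k='k, OF assms(1,2), of v] assms(4)
  by (cases "u < v") (auto simp: algebra_simps)

definition fin_supp :: "('a set \<Rightarrow> 'k::zero) \<Rightarrow> bool" where
  "fin_supp c \<longleftrightarrow> (\<forall>H. c H \<noteq> 0 \<longrightarrow> finite H)"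

text \<open>A cycle of lk F contracts to a cycle of lk (insert v F).\<close>
definition contract :: "'a::linorder \<Rightarrow> ('a set \<Rightarrow> 'k::field) \<Rightarrow> 'a set \<Rightarrow> 'k" where
  "contract v c G = (if v \<in> G then 0 else sg v G * c (insert v G))"

definition cone :: "'a::linorder \<Rightarrow> ('a set \<Rightarrow> 'k::field) \<Rightarrow> 'a set \<Rightarrow> 'k" where
  "cone v c H = (if v \<in> H then sg v (H - {v}) * c (H - {v}) else 0)"

definition avoid :: "'a \<Rightarrow> ('a set \<Rightarrow> 'k::zero) \<Rightarrow> 'a set \<Rightarrow> 'k" where
  "avoid v c H = (if v \<in> H then 0 else c H)"

lemma cone_contract_avoid:
  fixes c :: "'a::linorder set \<Rightarrow> 'k::field"
  shows "c H = cone v (contract v c) H + avoid v c H"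
proof (cases "v \<in> H")
  case True
  then have "insert v (H - {v}) = H" by blast
  then show ?thesis using True sg_sq[where 'k='k, of v "H - {v}"]
    by (simp add: cone_def contract_def avoid_def mult.assoc[symmetric])
qed (simp add: cone_def avoid_def)

lemma bd_add: "bd V (\<lambda>H. c H + c' H) G = bd V c G + bd V c' G"
  by (simp add: bd_def distrib_left sum.distrib)

lemma bd_diff: "bd V (\<lambda>H. c H - c' H) G = bd V c G - bd V c' G"
  by (simp add: bd_def right_diff_distrib sum_subtractf)

lemma bd_avoiding:
  assumes "\<And>H. v \<in> H \<Longrightarrow> c H = 0" and "v \<in> G"
  shows "bd V c G = 0"
  using assms by (simp add: bd_def)

lemma bd_infinite:
  assumes "fin_supp c" and "infinite G"
  shows "bd V c G = 0"
  unfolding bd_def using assms by (intro sum.neutral) (auto simp: fin_supp_def)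

lemma bd_contract:
  fixes c :: "'a::linorder set \<Rightarrow> 'k::field"
  assumes "finite V" "v \<in> V" "fin_supp c"
  shows "bd V (contract v c) G = - contract v (bd V c) G"
proof (cases "v \<in> G")
  case True
  then show ?thesis by (simp add: bd_def contract_def)
next
  case vG: False
  show ?thesis
  proof (cases "finite G")
    case False
    then have "fin_supp (contract v c)"
      using assms(3) by (auto simp: fin_supp_def contract_def)
    then show ?thesis
      using False vG assms(3) by (simp add: bd_infinite contract_def fin_supp_def)
  next
    case finG: True
    have VG: "V - G = insert v (V - insert v G)" using assms(2) vG by blast
    have "bd V (contract v c) G = (\<Sum>u\<in>V - insert v G. sg u G * contract v c (insert u G))"
      unfolding bd_sg VG using assms(1) by (simp add: contract_def)
    also have "\<dots> = (\<Sum>u\<in>V - insert v G. - sg v G * (sg u (insert v G) * c (insert u (insert v G))))"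
    proof (rule sum.cong)
      fix u assume "u \<in> V - insert v G"
      then have "u \<noteq> v" "u \<notin> G" by auto
      then show "sg u G * contract v c (insert u G)
          = - sg v G * (sg u (insert v G) * c (insert u (insert v G)))"
        using sg_swap[where 'k='k, OF finG \<open>u \<notin> G\<close> vG \<open>u \<noteq> v\<close>] vG
        by (simp add: contract_def insert_commute mult.assoc[symmetric])
    qed simp
    also have "\<dots> = - contract v (bd V c) G"
      using vG by (simp add: bd_sg contract_def sum_distrib_left sum_negf)
    finally show ?thesis .
  qed
qed

lemma bd_cone:
  fixes c :: "'a::linorder set \<Rightarrow> 'k::field"
  assumes "finite V" "v \<in> V" "fin_supp c" and avoids: "\<And>H. v \<in> H \<Longrightarrow> c H = 0"
  shows "bd V (cone v c) H = (if v \<in> H then - cone v (bd V c) H else c H)"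
proof (cases "v \<in> H")
  case vH: False
  have VH: "V - H = insert v (V - insert v H)" using assms(2) vH by blast
  have "(\<Sum>u\<in>V - insert v H. sg u H * cone v c (insert u H)) = 0"
    by (rule sum.neutral) (use vH in \<open>auto simp: cone_def\<close>)
  then have "bd V (cone v c) H = sg v H * cone v c (insert v H)"
    unfolding bd_sg VH using assms(1) by simp
  also have "\<dots> = c H"
    using vH sg_sq[where 'k='k, of v H] by (simp add: cone_def mult.assoc[symmetric])
  finally show ?thesis using vH by simp
next
  case vH: True
  define H1 where "H1 = H - {v}"
  have H: "H = insert v H1" and vH1: "v \<notin> H1" using vH unfolding H1_def by auto
  show ?thesis
  proof (cases "finite H1")
    case False
    have "fin_supp (cone v c)"
      using assms(3) by (auto simp: fin_supp_def cone_def)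
    moreover have "infinite H" using False H by simp
    ultimately show ?thesis
      using vH bd_infinite[OF assms(3) False] by (simp add: bd_infinite cone_def H1_def)
  next
    case finH1: True
    have VH1: "V - H1 = insert v (V - H)" using assms(2) H vH1 by blast
    have "bd V (cone v c) H = (\<Sum>u\<in>V - H. - sg v H1 * (sg u H1 * c (insert u H1)))"
      unfolding bd_sg
    proof (rule sum.cong)
      fix u assume "u \<in> V - H"
      then have uv: "u \<noteq> v" and uH1: "u \<notin> H1" using H by auto
      have "insert u H - {v} = insert u H1" using uv H vH1 by auto
      then have "sg u H * cone v c (insert u H) = (sg u (insert v H1) * sg v (insert u H1)) * c (insert u H1)"
        using H by (simp add: cone_def mult.assoc)
      then show "sg u H * cone v c (insert u H) = - sg v H1 * (sg u H1 * c (insert u H1))"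
        unfolding sg_swap2[where 'k='k, OF finH1 uH1 vH1 uv] by (simp add: algebra_simps)
    qed simp
    also have "\<dots> = - sg v H1 * bd V c H1"
      unfolding bd_sg VH1 using assms(1) avoids vH by (simp add: sum_distrib_left)
    also have "\<dots> = - cone v (bd V c) H"
      using vH by (simp add: cone_def H1_def)
    finally show ?thesis using vH by simp
  qed
qed

lemma mem_induced_link:
  "X \<in> induced (link K F) W \<longleftrightarrow> X \<subseteq> W \<and> X \<inter> F = {} \<and> X \<union> F \<in> K"
proof
  assume "X \<in> induced (link K F) W"
  then obtain G where "X \<subseteq> W" "X = G - F" "F \<subseteq> G" "G \<in> K"
    unfolding induced_def link_def by blast
  moreover have "G - F \<union> F = G" using \<open>F \<subseteq> G\<close> by blast
  ultimately show "X \<subseteq> W \<and> X \<inter> F = {} \<and> X \<union> F \<in> K" by auto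
next
  assume X: "X \<subseteq> W \<and> X \<inter> F = {} \<and> X \<union> F \<in> K"
  then have "X = (X \<union> F) - F" by blast
  then show "X \<in> induced (link K F) W" unfolding induced_def link_def using X by blast
qed

lemma chain_in_induced_link:
  "c \<in> chains (induced (link K F) W) d \<longleftrightarrow>
     (\<forall>H. c H \<noteq> 0 \<longrightarrow> H \<subseteq> W \<and> H \<inter> F = {} \<and> H \<union> F \<in> K \<and> card H = d)"
  by (auto simp: chains_def mem_induced_link)

lemma chain_supportD:
  assumes "c \<in> chains (induced (link K F) W) d" and "c H \<noteq> 0"
  shows "H \<subseteq> W" "H \<inter> F = {}" "H \<union> F \<in> K" "card H = d"
  using assms unfolding chain_in_induced_link by blast+

lemma chains_fin_supp:
  assumes "\<forall>X\<in>K. finite X" "c \<in> chains (induced (link K F) W) d"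
  shows "fin_supp c"
  unfolding fin_supp_def
proof (intro allI impI)
  fix H assume "c H \<noteq> 0"
  then have "H \<union> F \<in> K" using assms(2) unfolding chain_in_induced_link by blast
  then have "finite (H \<union> F)" using assms(1) by blast
  then show "finite H" by simp
qed

lemma chains_induced_mono:
  "W \<subseteq> W' \<Longrightarrow> chains (induced L W) d \<subseteq> chains (induced L W') d"
  unfolding chains_def induced_def by blast

lemma chains_add:
  assumes "c \<in> chains L d" "c' \<in> chains L d"
  shows "(\<lambda>H. c H + c' H) \<in> chains L d"
  unfolding chains_def
proof (intro CollectI allI impI)
  fix H assume "c H + c' H \<noteq> 0"
  then have "c H \<noteq> 0 \<or> c' H \<noteq> 0" by auto
  then show "H \<in> L \<and> card H = d" using assms unfolding chains_def by blast
qed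

lemma chains_diff:
  assumes "c \<in> chains L d" "c' \<in> chains L d"
  shows "(\<lambda>H. c H - c' H) \<in> chains L d"
  unfolding chains_def
proof (intro CollectI allI impI)
  fix H assume "c H - c' H \<noteq> 0"
  then have "c H \<noteq> 0 \<or> c' H \<noteq> 0" by auto
  then show "H \<in> L \<and> card H = d" using assms unfolding chains_def by blast
qed

lemma chains_avoid:
  "c \<in> chains (induced (link K F) W) d \<Longrightarrow> avoid v c \<in> chains (induced (link K F) (W - {v})) d"
  by (auto simp: chain_in_induced_link avoid_def)

lemma chains_link_insert:
  assumes down: "\<forall>X\<in>K. \<forall>Y\<subseteq>X. Y \<in> K" and c: "c \<in> chains (induced (link K (insert v F)) W) d"
  shows "c \<in> chains (induced (link K F) W) d"
  unfolding chain_in_induced_link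
proof (intro allI impI)
  fix H assume "c H \<noteq> 0"
  then have H: "H \<subseteq> W" "H \<inter> insert v F = {}" "H \<union> insert v F \<in> K" "card H = d"
    using c unfolding chain_in_induced_link by blast+
  have "H \<union> F \<subseteq> H \<union> insert v F" by blast
  then have "H \<union> F \<in> K" using down H(3) by blast
  then show "H \<subseteq> W \<and> H \<inter> F = {} \<and> H \<union> F \<in> K \<and> card H = d"
    using H by blast
qed

lemma chains_contract:
  fixes c :: "'a::linorder set \<Rightarrow> 'k::field"
  assumes fin: "\<forall>X\<in>K. finite X" and c: "c \<in> chains (induced (link K F) W) (Suc d)"
  shows "contract v c \<in> chains (induced (link K (insert v F)) (W - {v})) d"
  unfolding chain_in_induced_link
proof (intro allI impI)
  fix G assume "contract v c G \<noteq> 0"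
  then have vG: "v \<notin> G" and nz: "c (insert v G) \<noteq> 0"
    by (auto simp: contract_def split: if_splits)
  note vGW = chain_supportD(1)[OF c nz] and disj = chain_supportD(2)[OF c nz]
    and face = chain_supportD(3)[OF c nz] and card = chain_supportD(4)[OF c nz]
  have "finite (insert v G \<union> F)" using bspec[OF fin face] .
  then have "card G = d" using card vG by simp
  moreover have "G \<union> insert v F = insert v G \<union> F" by blast
  ultimately show "G \<subseteq> W - {v} \<and> G \<inter> insert v F = {} \<and> G \<union> insert v F \<in> K \<and> card G = d"
    using vG vGW disj face by auto
qed

lemma chains_cone:
  fixes c :: "'a::linorder set \<Rightarrow> 'k::field"
  assumes fin: "\<forall>X\<in>K. finite X" and "v \<in> W" "v \<notin> F"
    and c: "c \<in> chains (induced (link K (insert v F)) (W - {v})) d"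
  shows "cone v c \<in> chains (induced (link K F) W) (Suc d)"
  unfolding chain_in_induced_link
proof (intro allI impI)
  fix H assume "cone v c H \<noteq> 0"
  then have vH: "v \<in> H" and nz: "c (H - {v}) \<noteq> 0"
    by (auto simp: cone_def split: if_splits)
  note sub = chain_supportD(1)[OF c nz] and disj = chain_supportD(2)[OF c nz]
    and face = chain_supportD(3)[OF c nz] and card = chain_supportD(4)[OF c nz]
  have HF: "H \<union> F = (H - {v}) \<union> insert v F" using vH by blast
  have "finite (H \<union> F)" unfolding HF using bspec[OF fin face] .
  then have "card H = Suc d" using card vH by (metis card_Suc_Diff1 finite_Un)
  then show "H \<subseteq> W \<and> H \<inter> F = {} \<and> H \<union> F \<in> K \<and> card H = Suc d"
    using vH sub disj face HF assms(2,3) by auto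
qed

lemma simplicial_complex_facts:
  assumes "simplicial_complex V K"
  shows "finite V" "\<forall>X\<in>K. X \<subseteq> V" "\<forall>X\<in>K. finite X" "\<forall>X\<in>K. \<forall>Y\<subseteq>X. Y \<in> K"
proof -
  show "finite V" "\<forall>X\<in>K. X \<subseteq> V" "\<forall>X\<in>K. \<forall>Y\<subseteq>X. Y \<in> K"
    using assms unfolding simplicial_complex_def by blast+
  then show "\<forall>X\<in>K. finite X" by (meson finite_subset)
qed

lemma chain_link_insert_avoids:
  assumes "c \<in> chains (induced (link K (insert v F)) W) d" and "v \<in> H"
  shows "c H = 0"
  using chain_supportD(2)[OF assms(1)] assms(2) by blast

text \<open>Then
  y = z + bd (cone v c'), which is the part of z avoiding v plus c', is a cycle of
  lk_K(F)[W - {v}].  If that complex has no homology in this degree, y bounds some c'', and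
  then c'' - cone v c' bounds z.\<close>
lemma bounding_via_link:
  fixes z c' :: "'a::linorder set \<Rightarrow> 'k::field"
  assumes sc: "simplicial_complex V K" and vV: "v \<in> V" and vW: "v \<in> W" and vF: "v \<notin> F"
    and z: "z \<in> chains (induced (link K F) W) (Suc d)"
    and z_cycle: "\<And>G. card G = d \<Longrightarrow> bd V z G = 0"
    and c': "c' \<in> chains (induced (link K (insert v F)) (W - {v})) (Suc d)"
    and c'_bd: "\<And>G. card G = d \<Longrightarrow> bd V c' G = contract v z G"
    and acyclic: "\<not> red_hom_nonzero TYPE('k) V (induced (link K F) (W - {v})) (Suc d)"
  shows "\<exists>c \<in> chains (induced (link K F) W) (Suc (Suc d)). \<forall>H. card H = Suc d \<longrightarrow> bd V c H = z H"
proof -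
  note facts = simplicial_complex_facts[OF sc]
  have c'_avoids: "\<And>H. v \<in> H \<Longrightarrow> c' H = 0" using chain_link_insert_avoids[OF c'] .
  have fin_c': "fin_supp c'" using chains_fin_supp[OF facts(3) c'] .
  have fin_zv: "fin_supp (contract v z)"
    using chains_fin_supp[OF facts(3) chains_contract[OF facts(3) z]] .
  have bd_cone_z: "bd V (cone v (contract v z)) G = contract v z G" if "v \<notin> G" for G
    using bd_cone[OF facts(1) vV fin_zv] that by (simp add: contract_def)
  define y where "y H = avoid v z H + c' H" for H
  have y: "y \<in> chains (induced (link K F) (W - {v})) (Suc d)"
    unfolding y_def by (intro chains_add chains_avoid z chains_link_insert[OF facts(4) c'])
  have y_cycle: "bd V y G = 0" if "card G = d" for G
  proof (cases "v \<in> G")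
    case True
    then show ?thesis by (intro bd_avoiding[of v]) (auto simp: y_def avoid_def c'_avoids)
  next
    case False
    have "bd V z G = bd V (\<lambda>H. cone v (contract v z) H + avoid v z H) G"
      by (rule arg_cong[of _ _ "\<lambda>c. bd V c G"], rule ext, rule cone_contract_avoid)
    also have "\<dots> = bd V (cone v (contract v z)) G + bd V (avoid v z) G"
      by (rule bd_add)
    finally have "bd V z G = bd V (cone v (contract v z)) G + bd V (avoid v z) G" .
    then have "bd V (avoid v z) G = - contract v z G"
      using z_cycle[OF that] bd_cone_z[OF False] by (simp add: eq_neg_iff_add_eq_0 add.commute)
    moreover have "bd V y G = bd V (avoid v z) G + bd V c' G"
      unfolding y_def[abs_def] by (rule bd_add)
    ultimately show ?thesis using c'_bd[OF that] by simp
  qed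
  obtain c'' where c'': "c'' \<in> chains (induced (link K F) (W - {v})) (Suc (Suc d))"
    and c''_bd: "\<And>H. card H = Suc d \<Longrightarrow> bd V c'' H = y H"
    using acyclic y y_cycle unfolding red_hom_nonzero_def by auto
  define c where "c H = c'' H - cone v c' H" for H
  have "c'' \<in> chains (induced (link K F) W) (Suc (Suc d))"
    using chains_induced_mono[of "W - {v}" W] c'' by blast
  then have c: "c \<in> chains (induced (link K F) W) (Suc (Suc d))"
    unfolding c_def using chains_diff chains_cone[OF facts(3) vW vF c'] by blast
  have bd_c: "bd V c H = bd V c'' H - bd V (cone v c') H" for H
    unfolding c_def[abs_def] by (rule bd_diff)
  have "bd V c H = z H" if "card H = Suc d" for H
  proof (cases "v \<in> H")
    case True
    have "finite H" using that card.infinite by fastforce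
    then have "card (H - {v}) = d" using that True by simp
    then have "cone v (bd V c') H = cone v (contract v z) H" by (simp add: cone_def c'_bd)
    moreover have "z H = cone v (contract v z) H" using cone_contract_avoid[of z H v] True
      by (simp add: avoid_def)
    ultimately show ?thesis
      using True c''_bd[OF that] bd_cone[OF facts(1) vV fin_c' c'_avoids]
      by (simp add: bd_c y_def avoid_def c'_avoids)
  next
    case False
    then show ?thesis
      using c''_bd[OF that] bd_cone[OF facts(1) vV fin_c' c'_avoids]
      by (simp add: bd_c y_def avoid_def)
  qed
  with c show ?thesis by blast
qed

lemma cycle_nonzero:
  assumes "red_hom_nonzero TYPE('k::field) V L d"
  obtains z :: "'a::linorder set \<Rightarrow> 'k::field" and H where "z \<in> chains L d"
    and "\<And>G. card G + 1 = d \<Longrightarrow> bd V z G = 0"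
    and "\<not> (\<exists>c. c \<in> chains L (d + 1) \<and> (\<forall>F. card F = d \<longrightarrow> bd V c F = z F))"
    and "z H \<noteq> 0"
proof -
  obtain z :: "'a set \<Rightarrow> 'k" where z: "z \<in> chains L d" "\<forall>G. card G + 1 = d \<longrightarrow> bd V z G = 0"
    and not_bd: "\<not> (\<exists>c. c \<in> chains L (d + 1) \<and> (\<forall>F. card F = d \<longrightarrow> bd V c F = z F))"
    using assms unfolding red_hom_nonzero_def by blast
  have "(\<lambda>_. 0) \<in> chains L (d + 1)" by (simp add: chains_def)
  then obtain H where "bd V (\<lambda>_. 0) H \<noteq> z H" using not_bd by blast
  then have "z H \<noteq> 0" by (simp add: bd_def)
  then show ?thesis using that z not_bd by blast
qed

lemma minimal_cycle_descends_to_link: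
  assumes sc: "simplicial_complex V K"
    and nonzero: "red_hom_nonzero TYPE('k::field) V (induced (link K F) W) (Suc d)"
    and minimal: "\<And>v. v \<in> W \<Longrightarrow> \<not> red_hom_nonzero TYPE('k) V (induced (link K F) (W - {v})) (Suc d)"
  shows "\<exists>v\<in>W. insert v F \<in> K \<and> red_hom_nonzero TYPE('k) V (induced (link K (insert v F)) (W - {v})) d"
proof -
  note facts = simplicial_complex_facts[OF sc]
  obtain z :: "'a set \<Rightarrow> 'k" and H0 where z: "z \<in> chains (induced (link K F) W) (Suc d)"
    and z_cycle': "\<And>G. card G + 1 = Suc d \<Longrightarrow> bd V z G = 0"
    and not_bd: "\<not> (\<exists>c. c \<in> chains (induced (link K F) W) (Suc d + 1)
                     \<and> (\<forall>H. card H = Suc d \<longrightarrow> bd V c H = z H))"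
    and H0: "z H0 \<noteq> 0"
    using cycle_nonzero[OF nonzero] by metis
  have z_cycle: "\<And>G. card G = d \<Longrightarrow> bd V z G = 0" using z_cycle' by simp
  note H0_face = chain_supportD[OF z H0]
  have "H0 \<noteq> {}" using H0_face(4) by auto
  then obtain v where vH0: "v \<in> H0" by blast
  have vW: "v \<in> W" and vF: "v \<notin> F" using H0_face(1,2) vH0 by auto
  have "v \<in> H0 \<union> F" using vH0 by blast
  then have vV: "v \<in> V" using bspec[OF facts(2) H0_face(3)] by blast
  have "insert v F \<subseteq> H0 \<union> F" using vH0 by blast
  then have vF_face: "insert v F \<in> K" using bspec[OF facts(4) H0_face(3)] by blast
  have fin_z: "fin_supp z" using chains_fin_supp[OF facts(3) z] .
  have contract_cycle: "\<forall>G. card G + 1 = d \<longrightarrow> bd V (contract v z) G = 0"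
  proof (intro allI impI)
    fix G :: "'a set" assume G: "card G + 1 = d"
    show "bd V (contract v z) G = 0"
    proof (cases "finite G")
      case True
      then show ?thesis using G z_cycle[of "insert v G"]
        by (simp add: bd_contract[OF facts(1) vV fin_z] contract_def)
    next
      case False
      then show ?thesis using bd_infinite[OF fin_z, of "insert v G"]
        by (simp add: bd_contract[OF facts(1) vV fin_z] contract_def)
    qed
  qed
  have contract_not_bd: "\<not> (\<exists>c'. c' \<in> chains (induced (link K (insert v F)) (W - {v})) (d + 1)
                     \<and> (\<forall>G. card G = d \<longrightarrow> bd V c' G = contract v z G))"
  proof
    assume "\<exists>c'. c' \<in> chains (induced (link K (insert v F)) (W - {v})) (d + 1)
                     \<and> (\<forall>G. card G = d \<longrightarrow> bd V c' G = contract v z G)"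
    then obtain c' where c': "c' \<in> chains (induced (link K (insert v F)) (W - {v})) (Suc d)"
      and c'_bd: "\<And>G. card G = d \<Longrightarrow> bd V c' G = contract v z G" by auto
    show False
      using bounding_via_link[OF sc vV vW vF z z_cycle c' c'_bd minimal[OF vW]] not_bd by auto
  qed
  have "red_hom_nonzero TYPE('k) V (induced (link K (insert v F)) (W - {v})) d"
    unfolding red_hom_nonzero_def
    using chains_contract[OF facts(3) z] contract_cycle contract_not_bd by blast
  then show ?thesis using vW vF_face by blast
qed

lemma girth_le:
  assumes "W \<subseteq> V" "F \<in> K" "red_hom_nonzero TYPE('k::field) V (induced (link K F) W) (Suc p)"
  shows "girth TYPE('k) V K p \<le> enat (card W)"
proof -
  have "\<exists>W F. W \<subseteq> V \<and> card W = card W \<and> F \<in> K \<and> red_hom_nonzero TYPE('k) V (induced (link K F) W) (p + 1)"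
    using assms by auto
  then show ?thesis using assms unfolding girth_def by (auto intro: Least_le)
qed

lemma girth_minimal_witness:
  assumes "girth TYPE('k::field) V K p = enat n"
  obtains W F where "W \<subseteq> V" "card W = n" "F \<in> K"
    "red_hom_nonzero TYPE('k) V (induced (link K F) W) (Suc p)"
    "\<And>W'. W' \<subseteq> V \<Longrightarrow> card W' < n \<Longrightarrow> \<not> red_hom_nonzero TYPE('k) V (induced (link K F) W') (Suc p)"
proof -
  let ?P = "\<lambda>m. \<exists>W F. W \<subseteq> V \<and> card W = m \<and> F \<in> K \<and> red_hom_nonzero TYPE('k) V (induced (link K F) W) (p + 1)"
  have witness: "\<exists>W F. W \<subseteq> V \<and> F \<in> K \<and> red_hom_nonzero TYPE('k) V (induced (link K F) W) (p + 1)"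
  proof (rule ccontr)
    assume "\<not> ?thesis"
    then have "girth TYPE('k) V K p = \<infinity>" unfolding girth_def by (simp only: if_False)
    with assms show False by simp
  qed
  then have "girth TYPE('k) V K p = enat (LEAST m. ?P m)" unfolding girth_def by (simp only: if_True)
  then have n: "n = (LEAST m. ?P m)" using assms by simp
  from witness have "\<exists>m. ?P m" by blast
  from LeastI_ex[OF this] obtain W F where W: "W \<subseteq> V" "card W = n" "F \<in> K"
    "red_hom_nonzero TYPE('k) V (induced (link K F) W) (Suc p)"
    unfolding n[symmetric] by auto
  have "\<not> red_hom_nonzero TYPE('k) V (induced (link K F) W') (Suc p)"
    if "W' \<subseteq> V" "card W' < n" for W'
  proof
    assume "red_hom_nonzero TYPE('k) V (induced (link K F) W') (Suc p)"
    then have "?P (card W')" using that(1) W(3) by auto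
    with not_less_Least[of "card W'" ?P] that(2) n show False by blast
  qed
  with W show ?thesis using that by blast
qed

lemma girth_step:
  assumes sc: "simplicial_complex V K" and girth: "girth TYPE('k::field) V K (Suc q) = enat n"
  shows "girth TYPE('k) V K q \<le> enat (n - 1)"
proof -
  obtain W F where W: "W \<subseteq> V" "card W = n" "F \<in> K"
    and nonzero: "red_hom_nonzero TYPE('k) V (induced (link K F) W) (Suc (Suc q))"
    and minimal: "\<And>W'. W' \<subseteq> V \<Longrightarrow> card W' < n
                    \<Longrightarrow> \<not> red_hom_nonzero TYPE('k) V (induced (link K F) W') (Suc (Suc q))"
    using girth_minimal_witness[OF girth] by blast
  have "finite W" using W(1) simplicial_complex_facts(1)[OF sc] by (rule finite_subset)
  then have "\<not> red_hom_nonzero TYPE('k) V (induced (link K F) (W - {v})) (Suc (Suc q))" if "v \<in> W" for v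
    using minimal[of "W - {v}"] W(1,2) card_Diff1_less[OF \<open>finite W\<close> that] by blast
  then obtain v where v: "v \<in> W" "insert v F \<in> K"
    and link: "red_hom_nonzero TYPE('k) V (induced (link K (insert v F)) (W - {v})) (Suc q)"
    using minimal_cycle_descends_to_link[OF sc nonzero] by blast
  have "girth TYPE('k) V K q \<le> enat (card (W - {v}))"
    using girth_le[OF _ v(2) link] W(1) by blast
  then show ?thesis using v(1) W(2) \<open>finite W\<close> by simp
qed

lemma girth_descent:
  assumes sc: "simplicial_complex V K" and girth: "girth TYPE('k::field) V K p = enat n"
  shows "k \<le> p \<Longrightarrow> girth TYPE('k) V K (p - k) \<le> enat (n - k)"
proof (induction k)
  case 0
  then show ?case using girth by simp
next
  case (Suc k)
  then obtain m where m: "girth TYPE('k) V K (p - k) = enat m" "m \<le> n - k"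
    using enat_ile by fastforce
  have "p - k = Suc (p - Suc k)" using Suc.prems by simp
  then have "girth TYPE('k) V K (p - Suc k) \<le> enat (m - 1)"
    using girth_step[OF sc] m(1) by metis
  also have "\<dots> \<le> enat (n - Suc k)" using m(2) by simp
  finally show ?case .
qed

theorem mainTheorem11:
  fixes V :: "'a::linorder set" and K :: "'a set set" and p k :: nat
  assumes "simplicial_complex V K"
    and "girth TYPE('f::field) V K p \<noteq> \<infinity>"
    and "k \<le> p"
  shows "girth TYPE('f::field) V K (p - k) \<le> girth TYPE('f) V K p - enat k"
proof -
  obtain n where n: "girth TYPE('f) V K p = enat n" using assms(2) by auto
  then have "girth TYPE('f) V K (p - k) \<le> enat (n - k)"
    using girth_descent[OF assms(1) n assms(3)] by simp
  then show ?thesis using n by simp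
qed

end
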